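(* Let $G$ be a locally compact group with right Haar measure $\vartheta$, let $1\le p<\infty$, let $g\in G$ be aperiodic, and let $w:G\to(0,+\infty)$ be a bounded function. Suppose the weighted translation operator $T_{g,w}:\mathfrak{L}^p(G)\to\mathfrak{L}^p(G)$, $T_{g,w}(f)(x)=w(x)f(xg^{-1})$, is convex-cyclic and that the point spectrum of its adjoint is empty, $\sigma_p(T_{g,w}^* )=\emptyset$. Then for each compact subset $K\subset G$ with $\vartheta(K)>0$ there exist $N_0\in\mathbb{N}$, a sequence of Borel subsets $(E_n)$ of $K$, and a sequence $(a_n)\subseteq[0,1]$ with $\sum_{i=0}^\infty a_i=1$ such that $$1\Big/\liminf_{n\to\infty}\Big\Vert\Big(a_0\prod_{i=0}^{N_0-1}w*\delta_{g^{i}}+a_1\prod_{i=0}^{N_0}w*\delta_{g^{i}}+\cdots+a_n\prod_{i=0}^{N_0+n-1}w*\delta_{g^{i}}\Big)\Big|_{E_n}\Big\Vert_\infty=0.$$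
   Context: For $h\in G$, $\delta_h$ is the unit point mass at $h$ and $(f*\delta_h)(x)=f(xh^{-1})$; thus $(w*\delta_{g^{i}})(x)=w(xg^{-i})$. Products are pointwise, $F|_{E}$ denotes restriction to $E$, and $\Vert\cdot\Vert_\infty$ is the (essential) supremum norm. An element $g\in G$ is aperiodic if the closed subgroup generated by $g$ is not compact. A bounded linear operator $T$ on a Banach space $X$ is convex-cyclic if there is $x\in X$ such that the convex hull of $\{T^nx:n\ge0\}$ is dense in $X$. $T^*$ denotes the Banach-space adjoint acting on the dual space, and $\sigma_p$ denotes the set of eigenvalues. *)

theory Defs
  imports "HOL-Analysis.Analysis" "HOL-Probability.Probability"
begin

text \<open>Groups are written additively (class group_add, not necessarily abelian):
  the product x h of the paper is x + h, the inverse h^{-1} is - h, and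
  x h^{-1} is x + - h.\<close>

definition gpow :: "'a::group_add \<Rightarrow> nat \<Rightarrow> 'a" where
  "gpow g n = ((\<lambda>x. x + g) ^^ n) 0"

definition gipow :: "'a::group_add \<Rightarrow> int \<Rightarrow> 'a" where
  "gipow g k = (if 0 \<le> k then gpow g (nat k) else - gpow g (nat (- k)))"

definition aperiodic :: "'a::topological_group_add \<Rightarrow> bool" where
  "aperiodic g \<longleftrightarrow> \<not> compact (closure (range (gipow g)))"

definition right_haar_measure :: "'a::topological_group_add measure \<Rightarrow> bool" where
  "right_haar_measure M \<longleftrightarrow>
     sets M = sets borel \<and>
     emeasure M (space M) \<noteq> 0 \<and>
     (\<forall>A\<in>sets M. \<forall>h. emeasure M ((\<lambda>x. x + h) ` A) = emeasure M A) \<and>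
     (\<forall>K. compact K \<longrightarrow> emeasure M K < \<infinity>) \<and>
     (\<forall>A\<in>sets M. emeasure M A = (INF U\<in>{U. open U \<and> A \<subseteq> U}. emeasure M U)) \<and>
     (\<forall>U. open U \<longrightarrow> emeasure M U = (SUP K\<in>{K. compact K \<and> K \<subseteq> U}. emeasure M K))"

definition Lp_mem :: "'a measure \<Rightarrow> real \<Rightarrow> ('a \<Rightarrow> complex) \<Rightarrow> bool" where
  "Lp_mem M p f \<longleftrightarrow> f \<in> borel_measurable M \<and> integrable M (\<lambda>x. norm (f x) powr p)"

definition Lp_norm :: "'a measure \<Rightarrow> real \<Rightarrow> ('a \<Rightarrow> complex) \<Rightarrow> real" where
  "Lp_norm M p f = (\<integral>x. norm (f x) powr p \<partial>M) powr (1 / p)"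

definition wtrans :: "'a::group_add \<Rightarrow> ('a \<Rightarrow> real) \<Rightarrow> ('a \<Rightarrow> complex) \<Rightarrow> ('a \<Rightarrow> complex)" where
  "wtrans g w f = (\<lambda>x. complex_of_real (w x) * f (x + - g))"

definition convex_cyclic_Lp ::
  "'a measure \<Rightarrow> real \<Rightarrow> (('a \<Rightarrow> complex) \<Rightarrow> ('a \<Rightarrow> complex)) \<Rightarrow> bool" where
  "convex_cyclic_Lp M p T \<longleftrightarrow>
     (\<exists>f. Lp_mem M p f \<and>
        (\<forall>h. Lp_mem M p h \<longrightarrow> (\<forall>\<epsilon>>0. \<exists>N::nat. \<exists>c::nat \<Rightarrow> real.
            (\<forall>n\<le>N. 0 \<le> c n) \<and> (\<Sum>n\<le>N. c n) = 1 \<and>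
            Lp_norm M p (\<lambda>x. (\<Sum>n\<le>N. complex_of_real (c n) * (T ^^ n) f x) - h x) < \<epsilon>)))"

definition Lp_dual :: "'a measure \<Rightarrow> real \<Rightarrow> (('a \<Rightarrow> complex) \<Rightarrow> complex) \<Rightarrow> bool" where
  "Lp_dual M p \<phi> \<longleftrightarrow>
     (\<forall>f h. Lp_mem M p f \<longrightarrow> Lp_mem M p h \<longrightarrow> \<phi> (\<lambda>x. f x + h x) = \<phi> f + \<phi> h) \<and>
     (\<forall>f a. Lp_mem M p f \<longrightarrow> \<phi> (\<lambda>x. a * f x) = a * \<phi> f) \<and>
     (\<exists>C. \<forall>f. Lp_mem M p f \<longrightarrow> norm (\<phi> f) \<le> C * Lp_norm M p f)"

text \<open>Point spectrum of the adjoint T^* on the dual of L^p(M):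
  \<lambda> is an eigenvalue iff there is a nonzero bounded functional \<phi>
  with T^* \<phi> = \<phi> \<circ> T = \<lambda> \<phi>.\<close>
definition adjoint_point_spectrum ::
  "'a measure \<Rightarrow> real \<Rightarrow> (('a \<Rightarrow> complex) \<Rightarrow> ('a \<Rightarrow> complex)) \<Rightarrow> complex set" where
  "adjoint_point_spectrum M p T =
     {c. \<exists>\<phi>. Lp_dual M p \<phi> \<and> (\<exists>f. Lp_mem M p f \<and> \<phi> f \<noteq> 0) \<and>
            (\<forall>f. Lp_mem M p f \<longrightarrow> \<phi> (T f) = c * \<phi> f)}"

end

theory Submission
  imports Defs
begin

(* Write W_n for the product of the translates w * delta_(g^i), i < n, so that
   T^n f = W_n (f * delta_(g^n)).  If the W_n were essentially bounded on K by one
   constant C, no convex combination S of the orbit of f could approximate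
   h = 2 r 1_K: on K either |S| <= r, and then |S - h| >= r, or r^p < |S|^p, which by
   Jensen is at most C^p times a convex combination of the |f * delta_(g^n)|^p.
   Integrating, with the right invariance of the Haar measure, gives
   r^p vartheta(K) <= ||S - h||_p^p + C^p ||f||_p^p, which fails for large r.
   So the essential suprema of W_n on K are unbounded.  Picking m_0 < m_1 < ... with
   ess sup_K W_(m_j) > j 2^(j+1) and weights a_(m_j) = 2^-(j+1) (zero elsewhere), the
   partial sums sum_(k <= n) a_k W_k have essential supremum at least j on K as soon
   as n >= m_j.  Hence N_0 = 0 and E_n = K already work. *)

definition wprod :: "'a::group_add \<Rightarrow> ('a \<Rightarrow> real) \<Rightarrow> nat \<Rightarrow> 'a \<Rightarrow> real" where
  "wprod g w n x = (\<Prod>i<n. w (x + - gpow g i))"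

lemma gpow_0 [simp]: "gpow g 0 = 0"
  by (simp add: gpow_def)

lemma gpow_Suc: "gpow g (Suc n) = gpow g n + g"
  by (simp add: gpow_def)

lemma diff_gpow_Suc: "x - gpow g (Suc n) = x - g - gpow g n"
  by (simp only: gpow_Suc diff_conv_add_uminus minus_add add.assoc)

lemma wprod_Suc: "wprod g w (Suc n) x = w x * wprod g w n (x + - g)"
  unfolding wprod_def prod.lessThan_Suc_shift by (simp add: diff_gpow_Suc)

lemma wtrans_funpow:
  "(wtrans g w ^^ n) f x = complex_of_real (wprod g w n x) * f (x + - gpow g n)"
proof (induction n arbitrary: x)
  case 0
  then show ?case by (simp add: wprod_def)
next
  case (Suc n)
  then show ?case by (simp add: wtrans_def wprod_Suc diff_gpow_Suc)
qed

lemma wprod_nonneg: "(\<And>x. 0 \<le> w x) \<Longrightarrow> 0 \<le> wprod g w n x"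
  unfolding wprod_def by (intro prod_nonneg) auto

lemma wprod_le_power: "(\<And>x. 0 \<le> w x) \<Longrightarrow> (\<And>x. w x \<le> B) \<Longrightarrow> wprod g w n x \<le> B ^ n"
  unfolding wprod_def using prod_mono[of "{..<n}" "\<lambda>i. w (x + - gpow g i)" "\<lambda>_. B"] by simp

lemma max_powr_le_add: "0 \<le> x \<Longrightarrow> 0 \<le> y \<Longrightarrow> max x y powr p \<le> x powr p + y powr p"
  for x y p :: real
  by (simp add: max_def)

lemma norm_add_powr_le:
  fixes u v :: "'b::real_normed_vector"
  assumes "0 \<le> p"
  shows "norm (u + v) powr p \<le> 2 powr p * (norm u powr p + norm v powr p)"
proof -
  have "norm (u + v) powr p \<le> (2 * max (norm u) (norm v)) powr p"
    using assms norm_triangle_ineq[of u v] by (intro powr_mono2) auto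
  also have "\<dots> = 2 powr p * max (norm u) (norm v) powr p"
    by (simp add: powr_mult)
  also have "\<dots> \<le> 2 powr p * (norm u powr p + norm v powr p)"
    by (intro mult_left_mono max_powr_le_add) auto
  finally show ?thesis .
qed

lemma half_norm_powr_le:
  fixes a z :: "'b::real_normed_vector"
  assumes "0 \<le> p"
  shows "(norm a / 2) powr p \<le> norm (z - a) powr p + norm z powr p"
proof -
  have "norm a / 2 \<le> max (norm (z - a)) (norm z)"
    using norm_triangle_ineq4[of z "z - a"] by simp
  then have "(norm a / 2) powr p \<le> max (norm (z - a)) (norm z) powr p"
    using assms by (intro powr_mono2) auto
  also have "\<dots> \<le> norm (z - a) powr p + norm z powr p"
    by (intro max_powr_le_add) auto
  finally show ?thesis .
qed

lemma convex_on_powr_nonneg: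
  assumes "1 \<le> p"
  shows "convex_on {0..} (\<lambda>x::real. x powr p)"
proof (rule convex_onI)
  have shrink: "(s * z) powr p \<le> s * z powr p" if "0 \<le> s" "s \<le> 1" "0 \<le> z" for s z :: real
  proof -
    have "s powr p \<le> s powr 1"
      using that assms by (intro powr_mono') auto
    then show ?thesis
      using that by (auto simp: powr_mult intro: mult_right_mono)
  qed
  fix t x y :: real
  assume t: "0 < t" "t < 1" and x: "x \<in> {0..}" and y: "y \<in> {0..}"
  show "((1 - t) *\<^sub>R x + t *\<^sub>R y) powr p \<le> (1 - t) * x powr p + t * y powr p"
  proof (cases "x = 0 \<or> y = 0")
    case True
    then show ?thesis
      using t x y shrink[of "1 - t" x] shrink[of t y] by auto
  next
    case False
    then show ?thesis
      using x y t powr_convex[OF assms] unfolding convex_on_def by auto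
  qed
qed (simp add: convex_real_interval)

lemma norm_convex_combination_powr_le:
  fixes c b :: "nat \<Rightarrow> real" and z :: "nat \<Rightarrow> 'b::real_normed_vector"
  assumes p: "1 \<le> p" and c1: "(\<Sum>n\<le>N. c n) = 1" and c0: "\<And>n. n \<le> N \<Longrightarrow> 0 \<le> c n"
    and zb: "\<And>n. n \<le> N \<Longrightarrow> norm (z n) \<le> b n"
  shows "norm (\<Sum>n\<le>N. c n *\<^sub>R z n) powr p \<le> (\<Sum>n\<le>N. c n * b n powr p)"
proof -
  have b0: "0 \<le> b n" if "n \<le> N" for n
    using zb[OF that] norm_ge_zero order_trans by blast
  have "norm (\<Sum>n\<le>N. c n *\<^sub>R z n) \<le> (\<Sum>n\<le>N. c n * b n)"
    using c0 zb by (intro norm_sum[THEN order_trans] sum_mono) (auto intro: mult_left_mono)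
  then have "norm (\<Sum>n\<le>N. c n *\<^sub>R z n) powr p \<le> (\<Sum>n\<le>N. c n * b n) powr p"
    using p by (intro powr_mono2) auto
  also have "\<dots> \<le> (\<Sum>n\<le>N. c n * b n powr p)"
    using convex_on_sum[OF _ _ convex_on_powr_nonneg[OF p], of "{..N}" c b] c1 c0 b0 by auto
  finally show ?thesis .
qed

lemma right_haar_measure_sets: "right_haar_measure M \<Longrightarrow> sets M = sets borel"
  by (simp add: right_haar_measure_def)

lemma right_haar_measure_space: "right_haar_measure M \<Longrightarrow> space M = UNIV"
  using sets_eq_imp_space_eq[OF right_haar_measure_sets] by simp

lemma right_haar_measure_borel_measurable:
  "right_haar_measure M \<Longrightarrow> borel_measurable M = borel_measurable borel"
  by (rule measurable_cong_sets[OF right_haar_measure_sets refl])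

lemma right_haar_measure_compact_finite:
  "right_haar_measure M \<Longrightarrow> compact K \<Longrightarrow> emeasure M K < \<infinity>"
  by (simp add: right_haar_measure_def)

lemma measurable_right_translation:
  assumes "right_haar_measure M"
  shows "(\<lambda>x::'a::topological_group_add. x + a) \<in> measurable M M"
proof -
  have "(\<lambda>x::'a. x + a) \<in> borel_measurable borel"
    by (intro borel_measurable_continuous_onI continuous_intros)
  then show ?thesis
    using right_haar_measure_sets[OF assms] measurable_cong_sets by metis
qed

lemma vimage_right_translation: "(\<lambda>x. x + a) -` A = (\<lambda>y. y + - a) ` A"
  for a :: "'a::group_add"
proof (intro set_eqI iffI)
  fix x assume "x \<in> (\<lambda>x. x + a) -` A"
  moreover have "x = (x + a) + - a"
    by (simp add: add.assoc)
  ultimately show "x \<in> (\<lambda>y. y + - a) ` A"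
    by blast
qed (auto simp: add.assoc)

lemma emeasure_right_translation:
  "right_haar_measure M \<Longrightarrow> A \<in> sets M \<Longrightarrow> emeasure M ((\<lambda>x. x + a) ` A) = emeasure M A"
  unfolding right_haar_measure_def by (elim conjE) simp

lemma distr_right_translation:
  assumes haar: "right_haar_measure M"
  shows "distr M M (\<lambda>x::'a::topological_group_add. x + a) = M"
proof (rule measure_eqI)
  fix A assume "A \<in> sets (distr M M (\<lambda>x. x + a))"
  then have A: "A \<in> sets M"
    by simp
  have "emeasure (distr M M (\<lambda>x. x + a)) A = emeasure M ((\<lambda>x. x + a) -` A \<inter> space M)"
    using A by (simp add: emeasure_distr measurable_right_translation[OF haar])
  also have "(\<lambda>x. x + a) -` A \<inter> space M = (\<lambda>y. y + - a) ` A"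
    by (simp only: vimage_right_translation right_haar_measure_space[OF haar] Int_UNIV_right)
  also have "emeasure M \<dots> = emeasure M A"
    using emeasure_right_translation[OF haar A] .
  finally show "emeasure (distr M M (\<lambda>x. x + a)) A = emeasure M A" .
qed simp

lemma right_translation_measurable:
  "right_haar_measure M \<Longrightarrow> f \<in> borel_measurable M \<Longrightarrow> (\<lambda>x. f (x + a)) \<in> borel_measurable M"
  using measurable_compose[OF measurable_right_translation] by blast

lemma integrable_right_translation_iff:
  fixes f :: "'a::topological_group_add \<Rightarrow> real"
  assumes "right_haar_measure M" "f \<in> borel_measurable M"
  shows "integrable M (\<lambda>x. f (x + a)) \<longleftrightarrow> integrable M f"
  using integrable_distr_eq[OF measurable_right_translation[OF assms(1)] assms(2)]
  by (simp add: distr_right_translation[OF assms(1)])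

lemma integral_right_translation:
  fixes f :: "'a::topological_group_add \<Rightarrow> real"
  assumes "right_haar_measure M" "f \<in> borel_measurable M"
  shows "(\<integral>x. f (x + a) \<partial>M) = (\<integral>x. f x \<partial>M)"
  using integral_distr[OF measurable_right_translation[OF assms(1)] assms(2)]
  by (simp add: distr_right_translation[OF assms(1)])

lemma Lp_mem_zero: "Lp_mem M p (\<lambda>x. 0)"
  by (simp add: Lp_mem_def)

lemma Lp_mem_add:
  assumes p: "0 \<le> p" and f: "Lp_mem M p f" and h: "Lp_mem M p h"
  shows "Lp_mem M p (\<lambda>x. f x + h x)"
proof -
  have meas: "f \<in> borel_measurable M" "h \<in> borel_measurable M"
    using f h by (auto simp: Lp_mem_def)
  have "integrable M (\<lambda>x. 2 powr p * (norm (f x) powr p + norm (h x) powr p))"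
    using f h unfolding Lp_mem_def
    by (intro integrable_mult_right Bochner_Integration.integrable_add) auto
  moreover have "(\<lambda>x. norm (f x + h x) powr p) \<in> borel_measurable M"
    using meas by measurable
  moreover have "norm (norm (f x + h x) powr p)
      \<le> norm (2 powr p * (norm (f x) powr p + norm (h x) powr p))" for x
    using norm_add_powr_le[OF p, of "f x" "h x"] by simp
  ultimately have "integrable M (\<lambda>x. norm (f x + h x) powr p)"
    by (rule Bochner_Integration.integrable_bound[OF _ _ AE_I2])
  with meas show ?thesis
    by (simp add: Lp_mem_def)
qed

lemma Lp_mem_bounded_mult:
  assumes p: "0 \<le> p" and \<phi>: "\<phi> \<in> borel_measurable M" "\<And>x. norm (\<phi> x) \<le> B"
    and f: "Lp_mem M p f"
  shows "Lp_mem M p (\<lambda>x. \<phi> x * f x)"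
proof -
  have meas: "f \<in> borel_measurable M"
    using f by (simp add: Lp_mem_def)
  have "integrable M (\<lambda>x. B powr p * norm (f x) powr p)"
    using f by (simp add: Lp_mem_def)
  moreover have "(\<lambda>x. norm (\<phi> x * f x) powr p) \<in> borel_measurable M"
    using meas \<phi>(1) by measurable
  moreover have "norm (norm (\<phi> x * f x) powr p) \<le> norm (B powr p * norm (f x) powr p)" for x
    using p \<phi>(2)[of x] by (simp add: norm_mult powr_mult mult_right_mono powr_mono2)
  ultimately have "integrable M (\<lambda>x. norm (\<phi> x * f x) powr p)"
    by (rule Bochner_Integration.integrable_bound[OF _ _ AE_I2])
  with meas \<phi>(1) show ?thesis
    by (simp add: Lp_mem_def)
qed

lemma Lp_mem_sum:
  assumes "0 \<le> p" "\<And>n. n \<in> S \<Longrightarrow> Lp_mem M p (f n)"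
  shows "Lp_mem M p (\<lambda>x. \<Sum>n\<in>S. f n x)"
  using assms by (induction S rule: infinite_finite_induct) (auto simp: Lp_mem_zero Lp_mem_add)

lemma Lp_mem_diff:
  assumes "0 \<le> p" "Lp_mem M p f" "Lp_mem M p h"
  shows "Lp_mem M p (\<lambda>x. f x - h x)"
  using Lp_mem_add[OF assms(1,2) Lp_mem_bounded_mult[OF assms(1) _ _ assms(3), of "\<lambda>_. -1" 1]]
  by simp

lemma Lp_mem_indicator:
  assumes "K \<in> sets M" "emeasure M K < \<infinity>"
  shows "Lp_mem M p (\<lambda>x. c * indicator K x)"
proof -
  have "norm (c * indicator K x) powr p = norm c powr p * indicator K x" for x
    by (cases "x \<in> K") auto
  then show ?thesis
    using assms unfolding Lp_mem_def by (auto intro: integrable_real_indicator)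
qed

lemma Lp_mem_right_translation:
  assumes "right_haar_measure M" "Lp_mem M p f"
  shows "Lp_mem M p (\<lambda>x. f (x + a))"
proof -
  have "f \<in> borel_measurable M"
    using assms(2) by (simp add: Lp_mem_def)
  then have "(\<lambda>x. norm (f x) powr p) \<in> borel_measurable M"
    by measurable
  then show ?thesis
    using assms integrable_right_translation_iff[where f = "\<lambda>x. norm (f x) powr p"]
      right_translation_measurable[of M f]
    by (simp add: Lp_mem_def)
qed

lemma Lp_mem_wtrans:
  assumes haar: "right_haar_measure M" and p: "0 \<le> p"
    and w: "w \<in> borel_measurable borel" "\<And>x. \<bar>w x\<bar> \<le> B" and f: "Lp_mem M p f"
  shows "Lp_mem M p (wtrans g w f)"
  unfolding wtrans_def
  using w right_haar_measure_borel_measurable[OF haar]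
  by (intro Lp_mem_bounded_mult[OF p _ _ Lp_mem_right_translation[OF haar f], of _ B]) auto

lemma Lp_mem_wtrans_funpow:
  assumes "right_haar_measure M" "0 \<le> p"
    and "w \<in> borel_measurable borel" "\<And>x. \<bar>w x\<bar> \<le> B" and "Lp_mem M p f"
  shows "Lp_mem M p ((wtrans g w ^^ n) f)"
proof (induction n)
  case (Suc n)
  then show ?case
    using Lp_mem_wtrans[OF assms(1-4)] by simp
qed (simp add: assms(5))

lemma integral_norm_powr_less_one:
  assumes "0 < p" "Lp_norm M p f < 1"
  shows "(\<integral>x. norm (f x) powr p \<partial>M) < 1"
proof (rule ccontr)
  assume "\<not> ?thesis"
  then have "1 \<le> Lp_norm M p f"
    unfolding Lp_norm_def using assms(1) by (intro ge_one_powr_ge_zero) auto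
  with assms(2) show False by simp
qed

lemma Lp_mem_wtrans_combination:
  assumes "right_haar_measure M" "0 \<le> p"
    and "w \<in> borel_measurable borel" "\<And>x. \<bar>w x\<bar> \<le> B" and "Lp_mem M p f"
  shows "Lp_mem M p (\<lambda>x. \<Sum>n\<le>N. complex_of_real (c n) * (wtrans g w ^^ n) f x)"
proof (rule Lp_mem_sum[OF assms(2)])
  fix n
  show "Lp_mem M p (\<lambda>x. complex_of_real (c n) * (wtrans g w ^^ n) f x)"
    using assms(2) Lp_mem_bounded_mult[OF _ _ _ Lp_mem_wtrans_funpow[OF assms],
        where \<phi> = "\<lambda>_. complex_of_real (c n)" and B = "\<bar>c n\<bar>"]
    by simp
qed

lemma Lp_integral_right_translation:
  assumes "right_haar_measure M" "Lp_mem M p f"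
  shows "(\<integral>x. norm (f (x + a)) powr p \<partial>M) = (\<integral>x. norm (f x) powr p \<partial>M)"
proof -
  have "f \<in> borel_measurable M"
    using assms(2) by (simp add: Lp_mem_def)
  then have "(\<lambda>x. norm (f x) powr p) \<in> borel_measurable M"
    by measurable
  then show ?thesis
    using integral_right_translation[OF assms(1)] by blast
qed

lemma integral_convex_combination_right_translates:
  assumes haar: "right_haar_measure M" and f: "Lp_mem M p f" and c: "(\<Sum>n\<le>N. c n) = 1"
  shows "integrable M (\<lambda>x. \<Sum>n\<le>N. c n * norm (f (x + t n)) powr p)"
    and "(\<integral>x. (\<Sum>n\<le>N. c n * norm (f (x + t n)) powr p) \<partial>M) = (\<integral>x. norm (f x) powr p \<partial>M)"
proof -
  have int: "integrable M (\<lambda>x. norm (f (x + t n)) powr p)" for n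
    using Lp_mem_right_translation[OF haar f] by (simp add: Lp_mem_def)
  then show "integrable M (\<lambda>x. \<Sum>n\<le>N. c n * norm (f (x + t n)) powr p)"
    by auto
  show "(\<integral>x. (\<Sum>n\<le>N. c n * norm (f (x + t n)) powr p) \<partial>M) = (\<integral>x. norm (f x) powr p \<partial>M)"
    using int Lp_integral_right_translation[OF haar f] c
    by (simp add: sum_distrib_right[symmetric])
qed

lemma half_norm_powr_le_wtrans_combination:
  fixes c :: "nat \<Rightarrow> real" and a :: complex
  assumes p: "1 \<le> p" and C: "0 \<le> C" and c0: "\<forall>n\<le>N. 0 \<le> c n" and c1: "(\<Sum>n\<le>N. c n) = 1"
    and w0: "\<And>x. 0 \<le> w x" and bounded: "\<And>n. n \<le> N \<Longrightarrow> wprod g w n x \<le> C"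
  shows "(norm a / 2) powr p
    \<le> norm ((\<Sum>n\<le>N. complex_of_real (c n) * (wtrans g w ^^ n) f x) - a) powr p
      + C powr p * (\<Sum>n\<le>N. c n * norm (f (x + - gpow g n)) powr p)"
proof -
  define S where "S = (\<Sum>n\<le>N. complex_of_real (c n) * (wtrans g w ^^ n) f x)"
  have "norm S powr p \<le> (\<Sum>n\<le>N. c n * (C * norm (f (x + - gpow g n))) powr p)"
    unfolding S_def wtrans_funpow scaleR_conv_of_real[symmetric]
    using p c1 c0 bounded wprod_nonneg[of w, OF w0]
    by (intro norm_convex_combination_powr_le) (auto simp: norm_mult intro!: mult_right_mono)
  also have "\<dots> = C powr p * (\<Sum>n\<le>N. c n * norm (f (x + - gpow g n)) powr p)"
    using C by (simp add: powr_mult sum_distrib_left algebra_simps)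
  finally show ?thesis
    using half_norm_powr_le[of p a S] p unfolding S_def by simp
qed

lemma indicator_far_from_wtrans_combinations:
  fixes M :: "'a::topological_group_add measure" and c :: "nat \<Rightarrow> real"
  assumes haar: "right_haar_measure M" and p: "1 \<le> p"
    and w0: "\<And>x. 0 \<le> w x" and wB: "\<And>x. w x \<le> B" and wm: "w \<in> borel_measurable borel"
    and f: "Lp_mem M p f" and K: "K \<in> sets M" "emeasure M K < \<infinity>"
    and C: "0 \<le> C" and bounded: "\<And>n. AE x in M. x \<in> K \<longrightarrow> wprod g w n x \<le> C"
    and c0: "\<forall>n\<le>N. 0 \<le> c n" and c1: "(\<Sum>n\<le>N. c n) = 1" and r: "0 \<le> r"
  shows "r powr p * measure M K
    \<le> (\<integral>x. norm ((\<Sum>n\<le>N. complex_of_real (c n) * (wtrans g w ^^ n) f x)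
                    - complex_of_real (2 * r) * indicator K x) powr p \<partial>M)
      + C powr p * (\<integral>x. norm (f x) powr p \<partial>M)"
proof -
  define S where "S x = (\<Sum>n\<le>N. complex_of_real (c n) * (wtrans g w ^^ n) f x)" for x
  define h where "h x = complex_of_real (2 * r) * indicator K x" for x
  define F where "F x = (\<Sum>n\<le>N. c n * norm (f (x + - gpow g n)) powr p)" for x
  have wabs: "\<bar>w x\<bar> \<le> B" for x
    using w0[of x] wB[of x] by simp
  have "Lp_mem M p (\<lambda>x. S x - h x)"
    unfolding S_def h_def using p Lp_mem_indicator[OF K]
    by (intro Lp_mem_diff Lp_mem_wtrans_combination[OF haar _ wm wabs f]) auto
  then have diff_int: "integrable M (\<lambda>x. norm (S x - h x) powr p)"
    by (simp add: Lp_mem_def)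
  have F_int: "integrable M F" and F_integral: "(\<integral>x. F x \<partial>M) = (\<integral>x. norm (f x) powr p \<partial>M)"
    unfolding F_def[abs_def] by (rule integral_convex_combination_right_translates[OF haar f c1])+
  have "AE x in M. r powr p * indicator K x \<le> norm (S x - h x) powr p + C powr p * F x"
  proof -
    have "AE x in M. \<forall>n\<in>{..N}. x \<in> K \<longrightarrow> wprod g w n x \<le> C"
      using bounded by (intro AE_finite_allI) auto
    then show ?thesis
    proof (rule eventually_mono)
      fix x assume x: "\<forall>n\<in>{..N}. x \<in> K \<longrightarrow> wprod g w n x \<le> C"
      show "r powr p * indicator K x \<le> norm (S x - h x) powr p + C powr p * F x"
      proof (cases "x \<in> K")
        case True
        then show ?thesis
          using half_norm_powr_le_wtrans_combination[OF p C c0 c1 w0,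
              where x = x and a = "h x" and f = f and g = g] x r
          by (simp add: S_def h_def F_def)
      next
        case False
        have "0 \<le> F x"
          using c0 by (auto simp: F_def intro!: sum_nonneg)
        with False show ?thesis
          by simp
      qed
    qed
  qed
  then have "(\<integral>x. r powr p * indicator K x \<partial>M)
      \<le> (\<integral>x. norm (S x - h x) powr p + C powr p * F x \<partial>M)"
    using K diff_int F_int by (intro integral_mono_AE) auto
  then show ?thesis
    using K diff_int F_int F_integral by (simp add: S_def h_def)
qed

lemma convex_cyclic_wtrans_not_ess_bounded:
  fixes M :: "'a::topological_group_add measure" and w :: "'a \<Rightarrow> real"
  assumes haar: "right_haar_measure M" and p: "1 \<le> p"
    and w0: "\<And>x. 0 \<le> w x" and wB: "\<And>x. w x \<le> B" and wm: "w \<in> borel_measurable borel"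
    and cc: "convex_cyclic_Lp M p (wtrans g w)"
    and K: "K \<in> sets M" "emeasure M K < \<infinity>" "0 < emeasure M K"
    and C: "0 \<le> C"
  shows "\<exists>n. \<not> (AE x in M. x \<in> K \<longrightarrow> wprod g w n x \<le> C)"
proof (rule ccontr)
  assume "\<nexists>n. \<not> (AE x in M. x \<in> K \<longrightarrow> wprod g w n x \<le> C)"
  then have bounded: "AE x in M. x \<in> K \<longrightarrow> wprod g w n x \<le> C" for n
    by blast
  obtain f where f: "Lp_mem M p f" and dense: "\<And>h. Lp_mem M p h \<Longrightarrow> \<forall>\<epsilon>>0. \<exists>N::nat. \<exists>c::nat \<Rightarrow> real.
      (\<forall>n\<le>N. 0 \<le> c n) \<and> (\<Sum>n\<le>N. c n) = 1 \<and>
      Lp_norm M p (\<lambda>x. (\<Sum>n\<le>N. complex_of_real (c n) * (wtrans g w ^^ n) f x) - h x) < \<epsilon>"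
    using cc unfolding convex_cyclic_Lp_def by blast
  define I where "I = (\<integral>x. norm (f x) powr p \<partial>M)"
  have "0 \<le> I"
    unfolding I_def by (intro integral_nonneg_AE) auto
  then have "0 < 1 + C powr p * I"
    by (simp add: add_pos_nonneg)
  have "0 < measure M K"
    using K by (simp add: measure_def enn2real_positive_iff)
  define r where "r = ((1 + C powr p * I) / measure M K) powr (1 / p)"
  have "0 < r"
    using \<open>0 < 1 + C powr p * I\<close> \<open>0 < measure M K\<close> by (simp add: r_def)
  have r_powr: "r powr p * measure M K = 1 + C powr p * I"
    using \<open>0 < 1 + C powr p * I\<close> \<open>0 < measure M K\<close> p by (simp add: r_def powr_powr)
  obtain N and c :: "nat \<Rightarrow> real" where c0: "\<forall>n\<le>N. 0 \<le> c n" and c1: "(\<Sum>n\<le>N. c n) = 1"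
    and approx: "Lp_norm M p (\<lambda>x. (\<Sum>n\<le>N. complex_of_real (c n) * (wtrans g w ^^ n) f x)
                    - complex_of_real (2 * r) * indicator K x) < 1"
    using dense[OF Lp_mem_indicator[OF K(1,2)]] zero_less_one by blast
  have "r powr p * measure M K < 1 + C powr p * I"
    using indicator_far_from_wtrans_combinations[OF haar p w0 wB wm f K(1,2) C bounded c0 c1
        less_imp_le[OF \<open>0 < r\<close>]] integral_norm_powr_less_one[OF _ approx] p
    by (simp add: I_def)
  with r_powr show False
    by simp
qed

lemma esssup_restrict_space_ge:
  fixes f :: "'a \<Rightarrow> real"
  assumes K: "K \<in> sets M" and not_bounded: "\<not> (AE x in M. x \<in> K \<longrightarrow> f x \<le> z)"
  shows "ereal z \<le> esssup (restrict_space M K) (\<lambda>x. ereal (f x))"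
proof (rule ccontr)
  assume "\<not> ?thesis"
  then have less: "esssup (restrict_space M K) (\<lambda>x. ereal (f x)) < ereal z"
    by simp
  have "AE x in restrict_space M K. f x \<le> z"
    using esssup_AE[of "\<lambda>x. ereal (f x)" "restrict_space M K"]
  proof (rule eventually_mono)
    fix x assume "ereal (f x) \<le> esssup (restrict_space M K) (\<lambda>x. ereal (f x))"
    then have "ereal (f x) < ereal z"
      using less by (rule le_less_trans)
    then show "f x \<le> z"
      by simp
  qed
  moreover have "K \<inter> space M \<in> sets M"
    using K by simp
  ultimately have "AE x in M. x \<in> K \<longrightarrow> f x \<le> z"
    by (simp add: AE_restrict_space_iff)
  with not_bounded show False ..
qed

lemma not_AE_bounded_beyond:
  fixes F :: "nat \<Rightarrow> 'a \<Rightarrow> real"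
  assumes bounded: "\<And>n x. F n x \<le> b n"
    and unbounded: "\<And>C. 0 \<le> C \<Longrightarrow> \<exists>n. \<not> (AE x in M. x \<in> K \<longrightarrow> F n x \<le> C)"
    and C: "0 \<le> C"
  shows "\<exists>n>m. \<not> (AE x in M. x \<in> K \<longrightarrow> F n x \<le> C)"
proof -
  define C' where "C' = max C (Max (b ` {..m}))"
  have "0 \<le> C'"
    using C by (simp add: C'_def)
  then obtain n where n: "\<not> (AE x in M. x \<in> K \<longrightarrow> F n x \<le> C')"
    using unbounded by blast
  have "m < n"
  proof (rule ccontr)
    assume "\<not> m < n"
    then have "b n \<le> Max (b ` {..m})"
      by (intro Max_ge) auto
    then have "F n x \<le> C'" for x
      unfolding C'_def by (rule max.coboundedI2[OF order_trans[OF bounded]])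
    with n show False
      by simp
  qed
  moreover have "\<not> (AE x in M. x \<in> K \<longrightarrow> F n x \<le> C)"
  proof
    assume "AE x in M. x \<in> K \<longrightarrow> F n x \<le> C"
    then have "AE x in M. x \<in> K \<longrightarrow> F n x \<le> C'"
      by (rule eventually_mono) (auto simp: C'_def)
    with n show False
      by contradiction
  qed
  ultimately show ?thesis
    by blast
qed

lemma strict_mono_not_AE_bounded:
  fixes F :: "nat \<Rightarrow> 'a \<Rightarrow> real" and c :: "nat \<Rightarrow> real"
  assumes bounded: "\<And>n x. F n x \<le> b n"
    and unbounded: "\<And>C. 0 \<le> C \<Longrightarrow> \<exists>n. \<not> (AE x in M. x \<in> K \<longrightarrow> F n x \<le> C)"
    and c: "\<And>j. 0 \<le> c j"
  obtains m where "strict_mono m" "\<And>j. \<not> (AE x in M. x \<in> K \<longrightarrow> F (m j) x \<le> c j)"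
proof -
  have "\<exists>m. \<forall>j. \<not> (AE x in M. x \<in> K \<longrightarrow> F (m j) x \<le> c j) \<and> m j < m (Suc j)"
  proof (rule dependent_nat_choice)
    show "\<exists>n. \<not> (AE x in M. x \<in> K \<longrightarrow> F n x \<le> c 0)"
      using unbounded c by blast
    show "\<exists>n'. \<not> (AE x in M. x \<in> K \<longrightarrow> F n' x \<le> c (Suc j)) \<and> n < n'" for n j
      using not_AE_bounded_beyond[OF bounded unbounded c] by blast
  qed
  then show ?thesis
    using that by (auto simp: strict_mono_Suc_iff)
qed

lemma strict_mono_geometric_weights:
  assumes m: "strict_mono m"
  obtains a :: "nat \<Rightarrow> real"
  where "\<And>k. a k \<in> {0..1}" "a sums 1" "\<And>j. a (m j) = (1/2) ^ Suc j"
proof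
  define a where "a k = (if k \<in> range m then (1/2::real) ^ Suc (inv m k) else 0)" for k
  show a_m: "a (m j) = (1/2) ^ Suc j" for j
    using strict_mono_imp_inj_on[OF m] by (simp add: a_def)
  show "a k \<in> {0..1}" for k
    using power_le_one[of "1/2::real" "Suc (inv m k)"] by (auto simp: a_def simp del: power_Suc)
  have zero: "a k = 0" if "k \<notin> range m" for k
    using that by (simp add: a_def)
  have "(\<lambda>j. a (m j)) sums 1 \<longleftrightarrow> a sums 1"
    using zero by (rule sums_mono_reindex[OF m])
  then show "a sums 1"
    using power_half_series by (simp add: a_m)
qed

lemma esssup_partial_sum_ge:
  fixes F :: "nat \<Rightarrow> 'a \<Rightarrow> real"
  assumes K: "K \<in> sets M" and nonneg: "\<And>k x. 0 \<le> a k * F k x" and "i \<le> n"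
    and not_bounded: "\<not> (AE x in M. x \<in> K \<longrightarrow> a i * F i x \<le> z)"
  shows "ereal z \<le> esssup (restrict_space M K) (\<lambda>x. ereal (\<Sum>k\<le>n. a k * F k x))"
proof (rule esssup_restrict_space_ge[OF K], rule notI)
  assume "AE x in M. x \<in> K \<longrightarrow> (\<Sum>k\<le>n. a k * F k x) \<le> z"
  moreover have "a i * F i x \<le> (\<Sum>k\<le>n. a k * F k x)" for x
    using \<open>i \<le> n\<close> nonneg by (intro member_le_sum[of i "{..n}" "\<lambda>k. a k * F k x"]) auto
  ultimately have "AE x in M. x \<in> K \<longrightarrow> a i * F i x \<le> z"
    by (auto elim: eventually_mono intro: order_trans)
  with not_bounded show False ..
qed

lemma liminf_eq_PInfty_if_eventually_ge:
  fixes X :: "nat \<Rightarrow> ereal"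
  assumes "\<And>j::nat. \<exists>n\<^sub>0. \<forall>n\<ge>n\<^sub>0. ereal (real j) \<le> X n"
  shows "liminf X = \<infinity>"
proof -
  have "(X \<longlongrightarrow> \<infinity>) sequentially"
    unfolding tendsto_PInfty
  proof
    fix r :: real
    obtain j :: nat where "r < j"
      using reals_Archimedean2 by blast
    moreover obtain n\<^sub>0 where "\<And>n. n\<^sub>0 \<le> n \<Longrightarrow> ereal (real j) \<le> X n"
      using assms by blast
    ultimately show "\<forall>\<^sub>F n in sequentially. ereal r < X n"
      by (intro eventually_sequentiallyI[of n\<^sub>0]) (auto intro: less_le_trans[of _ "ereal (real j)"])
  qed
  then show ?thesis
    by (simp add: Liminf_PInfty)
qed

lemma exists_weights_esssup_liminf_infinite:
  fixes F :: "nat \<Rightarrow> 'a \<Rightarrow> real"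
  assumes K: "K \<in> sets M" and nonneg: "\<And>n x. 0 \<le> F n x" and bounded: "\<And>n x. F n x \<le> b n"
    and unbounded: "\<And>C. 0 \<le> C \<Longrightarrow> \<exists>n. \<not> (AE x in M. x \<in> K \<longrightarrow> F n x \<le> C)"
  shows "\<exists>a. (\<forall>k. a k \<in> {0..1}) \<and> a sums 1 \<and>
    liminf (\<lambda>n. esssup (restrict_space M K) (\<lambda>x. ereal (\<Sum>k\<le>n. a k * F k x))) = \<infinity>"
proof -
  obtain m where m: "strict_mono m"
    and large: "\<And>j. \<not> (AE x in M. x \<in> K \<longrightarrow> F (m j) x \<le> real j * 2 ^ Suc j)"
    using strict_mono_not_AE_bounded[OF bounded unbounded, of "\<lambda>j. real j * 2 ^ Suc j"] by auto
  obtain a :: "nat \<Rightarrow> real" where a01: "\<And>k. a k \<in> {0..1}" and "a sums 1"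
    and a_m: "\<And>j. a (m j) = (1/2) ^ Suc j"
    using strict_mono_geometric_weights[OF m] by blast
  have halve: "(1/2) ^ Suc j * y \<le> real j \<longleftrightarrow> y \<le> real j * 2 ^ Suc j" for j and y :: real
    by (simp add: field_simps)
  have "ereal (real j) \<le> esssup (restrict_space M K) (\<lambda>x. ereal (\<Sum>k\<le>n. a k * F k x))"
    if "m j \<le> n" for j n
  proof (rule esssup_partial_sum_ge[OF K _ that])
    show "0 \<le> a k * F k x" for k x
      using a01[of k] nonneg[of k x] by simp
    show "\<not> (AE x in M. x \<in> K \<longrightarrow> a (m j) * F (m j) x \<le> real j)"
      unfolding a_m halve by (rule large)
  qed
  then show ?thesis
    using a01 \<open>a sums 1\<close> by (auto intro!: liminf_eq_PInfty_if_eventually_ge)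
qed

theorem theorem2p3:
  fixes M :: "'a::{topological_group_add, t2_space} measure"
    and p :: real and g :: 'a and w :: "'a \<Rightarrow> real"
  assumes lc: "locally_compact_space (euclidean :: 'a topology)"
    and haar: "right_haar_measure M"
    and p: "1 \<le> p"
    and aper: "aperiodic g"
    and wpos: "\<forall>x. 0 < w x"
    and wbdd: "bounded (range w)"
    and wmeas: "w \<in> borel_measurable borel"
    and cc: "convex_cyclic_Lp M p (wtrans g w)"
    and sp: "adjoint_point_spectrum M p (wtrans g w) = {}"
    and K: "compact K" "emeasure M K > 0"
  shows "\<exists>N0::nat. \<exists>E :: nat \<Rightarrow> 'a set. \<exists>a :: nat \<Rightarrow> real.
           (\<forall>n. E n \<in> sets borel \<and> E n \<subseteq> K) \<and>
           (\<forall>n. a n \<in> {0..1}) \<and> a sums 1 \<and>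
           liminf (\<lambda>n. esssup (restrict_space M (E n))
              (\<lambda>x. ereal (\<Sum>k\<le>n. a k * (\<Prod>i<N0 + k. w (x + - gpow g i))))) = \<infinity>"
proof -
  obtain B where B: "\<forall>y\<in>range w. norm y \<le> B"
    using wbdd unfolding bounded_iff by blast
  have wB: "w x \<le> B" for x
    using B abs_le_D1[of "w x" B] by simp
  have w0: "\<And>x. 0 \<le> w x"
    using wpos less_imp_le by blast
  have K_borel: "K \<in> sets borel"
    using K(1) by (simp add: borel_compact)
  then have K_sets: "K \<in> sets M"
    using right_haar_measure_sets[OF haar] by simp
  have unbounded: "\<exists>n. \<not> (AE x in M. x \<in> K \<longrightarrow> wprod g w n x \<le> C)" if "0 \<le> C" for C
    using convex_cyclic_wtrans_not_ess_bounded[OF haar p w0 wB wmeas cc K_sets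
        right_haar_measure_compact_finite[OF haar K(1)] K(2) that] .
  obtain a where "\<forall>k. a k \<in> {0..1}" "a sums 1"
    "liminf (\<lambda>n. esssup (restrict_space M K) (\<lambda>x. ereal (\<Sum>k\<le>n. a k * wprod g w k x))) = \<infinity>"
    using exists_weights_esssup_liminf_infinite[OF K_sets wprod_nonneg[OF w0] wprod_le_power[OF w0 wB]
        unbounded] by blast
  then show ?thesis
    using K_borel unfolding wprod_def by (intro exI[of _ 0] exI[of _ "\<lambda>_. K"] exI[of _ a]) auto
qed

end
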